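(* If the NNF DAG of $F$ is in wDNNF, then for every $j\in\{1,\ldots,n\}$ the implication $$\hat F(\mathbf{1}^j,\mathbf{X}_{j+1}^n,\mathbf{1}^j,\overline{\mathbf{X}}_{j+1}^n,\mathbf{Y})\Rightarrow \hat F(\mathbf{1}^{j-1}0,\mathbf{X}_{j+1}^n,\mathbf{1}^{j-1}1,\overline{\mathbf{X}}_{j+1}^n,\mathbf{Y})\vee \hat F(\mathbf{1}^{j-1}1,\mathbf{X}_{j+1}^n,\mathbf{1}^{j-1}0,\overline{\mathbf{X}}_{j+1}^n,\mathbf{Y})$$ is valid (for all values of $\mathbf{X}_{j+1}^n,\overline{\mathbf{X}}_{j+1}^n,\mathbf{Y}$).
   Context: $\mathbf{X}=(x_1,\ldots,x_n)$ are outputs and $\mathbf{Y}=(y_1,\ldots,y_m)$ inputs; $\mathbf{X}_i^j=(x_i,\ldots,x_j)$. An NNF formula uses only $\wedge,\vee$ and negations applied to variables, represented as a rooted DAG with $\wedge/\vee$ internal nodes and literal leaves. For an internal node representing subformula $\alpha$, $\mathrm{lits}(\alpha)$ is the set of literals labeling leaves having a path to that node. The NNF DAG is in wDNNF if for every $\wedge$-node representing $\alpha=\alpha_1\wedge\cdots\wedge\alpha_k$ there is no literal $l$ and distinct $p,q$ with $l\in\mathrm{lits}(\alpha_p)$ and $\neg l\in\mathrm{lits}(\alpha_q)$. $\hat F(\mathbf{X},\overline{\mathbf{X}},\mathbf{Y})$ is obtained from the NNF DAG of $F$ by replacing each leaf $\neg x_i$ ($x_i\in\mathbf{X}$) by a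 fresh variable $\overline{x_i}$. For length-$j$ bit-vectors $\mathbf{b},\mathbf{c}$, $\hat F(\mathbf{b},\mathbf{X}_{j+1}^n,\mathbf{c},\overline{\mathbf{X}}_{j+1}^n,\mathbf{Y})$ sets $(x_1,\ldots,x_j):=\mathbf{b}$ and $(\overline{x_1},\ldots,\overline{x_j}):=\mathbf{c}$. $\mathbf{1}^{j-1}0$ is $j-1$ ones followed by $0$; $\mathbf{1}^{j-1}1=\mathbf{1}^j$ is all ones. *)

theory Defs
  imports Main
begin

(* Variables: output variables x_i (X i) and input variables y_k (Y k). *)
datatype var = X nat | Y nat

(* A literal is a polarity (True = positive, False = negated) and a variable. *)
type_synonym lit = "bool \<times> var"

(* NNF formulas; a DAG is represented by its tree unfolding (sharing does not affect
   semantics, lits, or the wDNNF condition). And/Or nodes have arbitrary arity. *)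
datatype nnf = Lit bool var | And "nnf list" | Or "nnf list"

fun neg_lit :: "lit \<Rightarrow> lit" where
  "neg_lit (p, v) = (\<not> p, v)"

fun lits :: "nnf \<Rightarrow> lit set" where
  "lits (Lit p v) = {(p, v)}"
| "lits (And fs) = (\<Union>f\<in>set fs. lits f)"
| "lits (Or fs) = (\<Union>f\<in>set fs. lits f)"

definition and_ok :: "nnf list \<Rightarrow> bool" where
  "and_ok fs \<longleftrightarrow> \<not> (\<exists>l p q. p < length fs \<and> q < length fs \<and> p \<noteq> q \<and>
                         l \<in> lits (fs ! p) \<and> neg_lit l \<in> lits (fs ! q))"

fun wDNNF :: "nnf \<Rightarrow> bool" where
  "wDNNF (Lit p v) = True"
| "wDNNF (And fs) = (and_ok fs \<and> (\<forall>f\<in>set fs. wDNNF f))"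
| "wDNNF (Or fs) = (\<forall>f\<in>set fs. wDNNF f)"

fun xvars :: "nnf \<Rightarrow> nat set" where
  "xvars (Lit p (X i)) = {i}"
| "xvars (Lit p (Y k)) = {}"
| "xvars (And fs) = (\<Union>f\<in>set fs. xvars f)"
| "xvars (Or fs) = (\<Union>f\<in>set fs. xvars f)"

(* Evaluation of \<hat>F(X, Xbar, Y): a positive leaf x_i reads xs i, a leaf \<not>x_i is
   replaced by the fresh variable xbar_i and reads xb i; input literals as usual. *)
fun eval_hat :: "(nat \<Rightarrow> bool) \<Rightarrow> (nat \<Rightarrow> bool) \<Rightarrow> (nat \<Rightarrow> bool) \<Rightarrow> nnf \<Rightarrow> bool" where
  "eval_hat xs xb ys (Lit True (X i)) = xs i"
| "eval_hat xs xb ys (Lit False (X i)) = xb i"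
| "eval_hat xs xb ys (Lit p (Y k)) = (if p then ys k else \<not> ys k)"
| "eval_hat xs xb ys (And fs) = (\<forall>f\<in>set fs. eval_hat xs xb ys f)"
| "eval_hat xs xb ys (Or fs) = (\<exists>f\<in>set fs. eval_hat xs xb ys f)"

end

theory Submission
  imports Defs
begin

text \<open>The implication holds for every value of the remaining variables, so the prefix
\<open>1\<^sup>j\<^sup>-\<^sup>1\<close> and the range of the output indices play no role. In a conjunction, wDNNF
forbids \<open>x\<^sub>j\<close> and \<open>\<not>x\<^sub>j\<close> from occurring in two different children. So either one
of the two literals occurs in no child, and lowering the corresponding fresh variable changes no
child, or both occur in a single child, to which the induction hypothesis applies while the other
children depend on neither literal.\<close>

lemma eval_hat_cong_xs:
  assumes "(True, X j) \<notin> lits F" and "\<And>i. i \<noteq> j \<Longrightarrow> xs i = xs' i"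
  shows "eval_hat xs xb ys F = eval_hat xs' xb ys F"
  using assms by (induction xs xb ys F rule: eval_hat.induct) auto

lemma eval_hat_cong_xb:
  assumes "(False, X j) \<notin> lits F" and "\<And>i. i \<noteq> j \<Longrightarrow> xb i = xb' i"
  shows "eval_hat xs xb ys F = eval_hat xs xb' ys F"
  using assms by (induction xs xb ys F rule: eval_hat.induct) auto

lemma and_ok_complementary_lits_same_child:
  assumes "and_ok fs" "p < length fs" "q < length fs"
    and "l \<in> lits (fs ! p)" "neg_lit l \<in> lits (fs ! q)"
  shows "p = q"
  using assms unfolding and_ok_def by blast

lemma eval_hat_lower_one_fresh_pair:
  assumes "wDNNF F" and "eval_hat (xs(j := True)) (xb(j := True)) ys F"
  shows "eval_hat (xs(j := False)) (xb(j := True)) ys F \<or>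
         eval_hat (xs(j := True)) (xb(j := False)) ys F"
  using assms
proof (induction F)
  case (Lit p v)
  then show ?case by (cases p; cases v) auto
next
  case (Or fs)
  then obtain c where "c \<in> set fs" "eval_hat (xs(j := True)) (xb(j := True)) ys c"
    by (auto simp del: fun_upd_apply)
  moreover have "wDNNF c" using Or.prems(1) \<open>c \<in> set fs\<close> by simp
  ultimately show ?case using Or.IH by (auto simp del: fun_upd_apply)
next
  case (And fs)
  let ?TT = "eval_hat (xs(j := True)) (xb(j := True)) ys"
  let ?FT = "eval_hat (xs(j := False)) (xb(j := True)) ys"
  let ?TF = "eval_hat (xs(j := True)) (xb(j := False)) ys"
  have TT: "\<forall>c\<in>set fs. ?TT c" using And.prems(2) by (simp del: fun_upd_apply)
  have TT_FT: "?TT c = ?FT c" if "(True, X j) \<notin> lits c" for c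
    by (rule eval_hat_cong_xs[OF that]) simp
  have TT_TF: "?TT c = ?TF c" if "(False, X j) \<notin> lits c" for c
    by (rule eval_hat_cong_xb[OF that]) simp
  have ok: "and_ok fs" using And.prems(1) by simp
  consider (no_pos) "\<forall>c\<in>set fs. (True, X j) \<notin> lits c"
    | (no_neg) "\<forall>c\<in>set fs. (False, X j) \<notin> lits c"
    | (both) p where "p < length fs" "(True, X j) \<in> lits (fs ! p)" "(False, X j) \<in> lits (fs ! p)"
  proof (cases "(\<forall>c\<in>set fs. (True, X j) \<notin> lits c) \<or> (\<forall>c\<in>set fs. (False, X j) \<notin> lits c)")
    case False
    then obtain p q where "p < length fs" "(True, X j) \<in> lits (fs ! p)"
      "q < length fs" "(False, X j) \<in> lits (fs ! q)"
      by (auto simp: in_set_conv_nth)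
    moreover have "p = q"
      by (rule and_ok_complementary_lits_same_child[OF ok]) (use calculation in auto)
    ultimately show thesis using both by blast
  qed blast
  then show ?case
  proof cases
    case no_pos
    then show ?thesis using TT TT_FT by (simp del: fun_upd_apply)
  next
    case no_neg
    then show ?thesis using TT TT_TF by (simp del: fun_upd_apply)
  next
    case both
    have others: "?FT (fs ! r) \<and> ?TF (fs ! r)" if "r < length fs" "r \<noteq> p" for r
    proof -
      have "(True, X j) \<notin> lits (fs ! r)" "(False, X j) \<notin> lits (fs ! r)"
        using and_ok_complementary_lits_same_child[OF ok, of p r "(True, X j)"]
          and_ok_complementary_lits_same_child[OF ok, of r p "(True, X j)"] both that
        by auto
      moreover have "?TT (fs ! r)" using TT that(1) by (simp del: fun_upd_apply)
      ultimately show ?thesis using TT_FT TT_TF by blast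
    qed
    have "fs ! p \<in> set fs" using both(1) by simp
    then have "?FT (fs ! p) \<or> ?TF (fs ! p)"
      using And.IH And.prems(1) TT by (simp del: fun_upd_apply)
    then show ?thesis
    proof
      assume "?FT (fs ! p)"
      then have "\<forall>r<length fs. ?FT (fs ! r)" using others by blast
      then show ?thesis by (simp add: all_set_conv_all_nth del: fun_upd_apply)
    next
      assume "?TF (fs ! p)"
      then have "\<forall>r<length fs. ?TF (fs ! r)" using others by blast
      then show ?thesis by (simp add: all_set_conv_all_nth del: fun_upd_apply)
    qed
  qed
qed

theorem mainTheorem8:
  fixes F :: nnf and n j :: nat
  assumes "xvars F \<subseteq> {1..n}"
    and "wDNNF F"
    and "j \<in> {1..n}"
  shows "\<forall>xs xb ys. (\<forall>i. 1 \<le> i \<and> i < j \<longrightarrow> xs i \<and> xb i) \<longrightarrow>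
           eval_hat (xs(j := True)) (xb(j := True)) ys F \<longrightarrow>
           eval_hat (xs(j := False)) (xb(j := True)) ys F \<or>
           eval_hat (xs(j := True)) (xb(j := False)) ys F"
  using eval_hat_lower_one_fresh_pair[OF assms(2)] by blast

end
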